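(* Any non-degenerate twisted diagonal action is properly discontinuous, and the quotient is a compact manifold.
   Context: Let $E$ be a real vector space of dimension $k$, $\mathcal B$ a basis of $E$, and $\mathcal L$ the free abelian group generated by $\mathcal B$ (acting on $E$ by translations). Let $\xi_1,\dots,\xi_s\in(\mathbb R_{>0})^s$, $\xi_i=(\xi_i^{(1)},\dots,\xi_i^{(s)})$, and let $A_1,\dots,A_s\in GL(E)$ be pairwise commuting linear automorphisms, each restricting to an automorphism of $\mathcal L$. Let $G=\mathbb Z^s\ltimes\mathcal L$ be the semidirect product where the $i$-th generator $\tau_i$ of $\mathbb Z^s$ acts on $\mathcal L$ by $A_i$. The twisted diagonal action of $G$ on $(\mathbb R_{>0})^s\times E$ is: $\mathcal L$ acts by translations on the $E$ factor, and $\tau_i(x_1,\dots,x_s,v)=(\xi_i^{(1)}x_1,\dots,\xi_i^{(s)}x_s,A_i(v))$. It is non-degenerate if the vectors $(\log\xi_i^{(1)},\dots,\log\xi_i^{(s)})$, $1\le i\le s$, form a basis of $\mathbb R^s$. *)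

theory Defs
  imports "HOL-Analysis.Analysis"
begin

definition zpow_fun :: "('e \<Rightarrow> 'e) \<Rightarrow> int \<Rightarrow> ('e \<Rightarrow> 'e)" where
  "zpow_fun f m = (if 0 \<le> m then f ^^ nat m else (inv f) ^^ nat (- m))"

text \<open>A^n = product of the A_i^(n_i) for pairwise commuting A_i.\<close>
definition Apow :: "('s::finite \<Rightarrow> 'e \<Rightarrow> 'e) \<Rightarrow> ('s \<Rightarrow> int) \<Rightarrow> ('e \<Rightarrow> 'e)" where
  "Apow A n = Finite_Set.fold (\<lambda>i g. zpow_fun (A i) (n i) \<circ> g) id (UNIV :: 's set)"

definition int_span :: "'e::real_vector set \<Rightarrow> 'e set" where
  "int_span B = {v. \<exists>c :: 'e \<Rightarrow> int. v = (\<Sum>b\<in>B. real_of_int (c b) *\<^sub>R b)}"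

definition tda_space :: "((real^'s) \<times> 'e::euclidean_space) set" where
  "tda_space = {x. \<forall>j. 0 < fst x $ j}"

text \<open>The group G = Z^s \<ltimes> L, as pairs (n, l), with element (n,l) = l \<cdot> \<tau>^n.\<close>
definition tda_group :: "'e::euclidean_space set \<Rightarrow> (('s::finite \<Rightarrow> int) \<times> 'e) set" where
  "tda_group B = UNIV \<times> int_span B"

definition tda_act ::
  "('s::finite \<Rightarrow> real^'s) \<Rightarrow> ('s \<Rightarrow> 'e \<Rightarrow> 'e) \<Rightarrow> (('s \<Rightarrow> int) \<times> 'e::real_vector)
     \<Rightarrow> (real^'s) \<times> 'e \<Rightarrow> (real^'s) \<times> 'e" where
  "tda_act \<xi> A g p =
     ((\<chi> j. fst p $ j * (\<Prod>i\<in>UNIV. (\<xi> i $ j) powi (fst g i))),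
      Apow A (fst g) (snd p) + snd g)"

definition tda_nondegenerate :: "('s::finite \<Rightarrow> real^'s) \<Rightarrow> bool" where
  "tda_nondegenerate \<xi> \<longleftrightarrow>
     (let v = (\<lambda>i. \<chi> j. ln (\<xi> i $ j)) in
        inj v \<and> independent (range v) \<and> span (range v) = UNIV)"

definition properly_discontinuous ::
  "'g set \<Rightarrow> ('g \<Rightarrow> 'a \<Rightarrow> 'a) \<Rightarrow> 'a::topological_space set \<Rightarrow> bool" where
  "properly_discontinuous G act X \<longleftrightarrow>
     (\<forall>K. compact K \<and> K \<subseteq> X \<longrightarrow> finite {g \<in> G. act g ` K \<inter> K \<noteq> {}})"

definition orbit :: "'g set \<Rightarrow> ('g \<Rightarrow> 'a \<Rightarrow> 'a) \<Rightarrow> 'a \<Rightarrow> 'a set" where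
  "orbit G act p = {act g p | g. g \<in> G}"

definition quotient_topology :: "'a topology \<Rightarrow> ('a \<Rightarrow> 'b) \<Rightarrow> 'b topology" where
  "quotient_topology X f =
     topology (\<lambda>U. U \<subseteq> f ` topspace X \<and> openin X {x \<in> topspace X. f x \<in> U})"

definition is_manifold_modelled_on :: "'b topology \<Rightarrow> 'm::euclidean_space itself \<Rightarrow> bool" where
  "is_manifold_modelled_on T _ \<longleftrightarrow>
     Hausdorff_space T \<and> second_countable T \<and>
     (\<forall>q \<in> topspace T. \<exists>U. openin T U \<and> q \<in> U \<and>
        (\<exists>V :: 'm set. open V \<and> subtopology T U homeomorphic_space top_of_set V))"

end

theory Submission
  imports Defs
begin

(* In the coordinates (ln x, v), tau^n acts on the first factor as translation by
   log_shift xi n = n_1 ln xi_1 + ... + n_s ln xi_s, and non-degeneracy says that the vectors ln xi_i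
   form a basis of R^s.  So Z^s acts on R^s by a lattice of translations, just as L acts on E.
   If (n, l) moves a point of a compact set K back into K, then log_shift xi n is bounded, which
   leaves finitely many n, and l = snd (g p) - A^n (snd p) is bounded, which leaves finitely many l:
   the action is properly discontinuous.  It is free, because log_shift xi n = 0 forces n = 0.
   Subtracting integer parts of coordinates (in the basis ln xi_i of R^s and in B) moves every point
   into a fixed compact set, so the quotient is compact.  Finally, the quotient of an open subset of
   a Euclidean space by a free, properly discontinuous action is Hausdorff and the orbit map is a
   local homeomorphism, so the quotient is a manifold. *)

section \<open>Quotient topologies\<close>

lemma istopology_quotient:
  "istopology (\<lambda>U. U \<subseteq> f ` topspace X \<and> openin X {x \<in> topspace X. f x \<in> U})"
proof -
  have preimage_Int: "{x \<in> topspace X. f x \<in> S \<inter> T}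
      = {x \<in> topspace X. f x \<in> S} \<inter> {x \<in> topspace X. f x \<in> T}" for S T
    by auto
  have preimage_Union: "{x \<in> topspace X. f x \<in> \<Union>\<K>} = (\<Union>S\<in>\<K>. {x \<in> topspace X. f x \<in> S})" for \<K>
    by auto
  show ?thesis
    unfolding istopology_def preimage_Int preimage_Union by (auto intro!: openin_Union)
qed

lemma openin_quotient_topology:
  "openin (quotient_topology X f) U \<longleftrightarrow>
     U \<subseteq> f ` topspace X \<and> openin X {x \<in> topspace X. f x \<in> U}"
  unfolding quotient_topology_def using istopology_quotient[of f X] by (simp add: topology_inverse')

lemma topspace_quotient_topology: "topspace (quotient_topology X f) = f ` topspace X"
proof (rule subset_antisym)
  show "topspace (quotient_topology X f) \<subseteq> f ` topspace X"
    using openin_topspace[of "quotient_topology X f"] unfolding openin_quotient_topology by blast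
  have "{x \<in> topspace X. f x \<in> f ` topspace X} = topspace X"
    by auto
  then have "openin (quotient_topology X f) (f ` topspace X)"
    unfolding openin_quotient_topology by simp
  then show "f ` topspace X \<subseteq> topspace (quotient_topology X f)"
    by (rule openin_subset)
qed

lemma continuous_map_quotient_topology: "continuous_map X (quotient_topology X f) f"
  unfolding continuous_map_def topspace_quotient_topology openin_quotient_topology by auto

lemma open_map_quotient_topology:
  assumes "\<And>W. openin X W \<Longrightarrow> openin X {x \<in> topspace X. f x \<in> f ` W}"
  shows "open_map X (quotient_topology X f) f"
  unfolding open_map_def openin_quotient_topology using assms openin_subset by blast

lemma second_countable_euclidean:
  "second_countable (euclidean :: 'a::second_countable_topology topology)"
proof -
  obtain \<B> :: "'a set set" where \<B>: "countable \<B>" "\<And>C. C \<in> \<B> \<Longrightarrow> open C"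
    "\<And>S. open S \<Longrightarrow> \<exists>\<U>. \<U> \<subseteq> \<B> \<and> S = \<Union>\<U>"
    using univ_second_countable by blast
  have "\<exists>V\<in>\<B>. x \<in> V \<and> V \<subseteq> U" if "open U" "x \<in> U" for U x
    using \<B>(3)[OF \<open>open U\<close>] \<open>x \<in> U\<close> by blast
  then show ?thesis
    unfolding second_countable_def using \<B>(1,2) by auto
qed

section \<open>Orbit spaces of group actions\<close>

locale continuous_group_action =
  fixes G :: "'g set" and act :: "'g \<Rightarrow> 'a::topological_space \<Rightarrow> 'a" and X :: "'a set"
    and gmul :: "'g \<Rightarrow> 'g \<Rightarrow> 'g" and ginv :: "'g \<Rightarrow> 'g" and gone :: 'g
  assumes gone_closed: "gone \<in> G"
    and gmul_closed: "g \<in> G \<Longrightarrow> h \<in> G \<Longrightarrow> gmul g h \<in> G"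
    and ginv_closed: "g \<in> G \<Longrightarrow> ginv g \<in> G"
    and act_gone: "act gone x = x"
    and act_gmul: "act g (act h x) = act (gmul g h) x"
    and act_ginv: "act (ginv g) (act g x) = x"
    and continuous_on_act: "g \<in> G \<Longrightarrow> continuous_on X (act g)"
    and open_X: "open X"
begin

abbreviation orbit_space :: "'a set topology" where
  "orbit_space \<equiv> quotient_topology (top_of_set X) (orbit G act)"

lemma mem_orbit_iff: "y \<in> orbit G act x \<longleftrightarrow> (\<exists>g\<in>G. y = act g x)"
  unfolding orbit_def by blast

lemma orbit_eq_iff: "orbit G act x = orbit G act y \<longleftrightarrow> (\<exists>g\<in>G. y = act g x)"
proof
  assume "orbit G act x = orbit G act y"
  moreover have "y \<in> orbit G act y"
    unfolding mem_orbit_iff using gone_closed act_gone by metis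
  ultimately have "y \<in> orbit G act x"
    by simp
  then show "\<exists>g\<in>G. y = act g x"
    by (simp only: mem_orbit_iff)
next
  assume "\<exists>g\<in>G. y = act g x"
  then obtain g where g: "g \<in> G" "y = act g x" by blast
  have "act h x \<in> orbit G act y" if "h \<in> G" for h
  proof -
    have "act h x = act (gmul h (ginv g)) y"
      using g by (simp flip: act_gmul add: act_ginv)
    then show ?thesis
      using g that by (auto simp: mem_orbit_iff intro: gmul_closed ginv_closed)
  qed
  moreover have "act h y \<in> orbit G act x" if "h \<in> G" for h
    using g that by (auto simp: mem_orbit_iff act_gmul intro: gmul_closed)
  ultimately show "orbit G act x = orbit G act y"
    by (auto simp: mem_orbit_iff)
qed

lemma orbit_saturation:
  assumes "W \<subseteq> X"
  shows "{x \<in> X. orbit G act x \<in> orbit G act ` W} = (\<Union>g\<in>G. X \<inter> act g -` W)"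
proof (intro subset_antisym subsetI)
  fix x assume "x \<in> {x \<in> X. orbit G act x \<in> orbit G act ` W}"
  then obtain w where "x \<in> X" "w \<in> W" "orbit G act x = orbit G act w" by blast
  then show "x \<in> (\<Union>g\<in>G. X \<inter> act g -` W)"
    unfolding orbit_eq_iff by blast
next
  fix x assume "x \<in> (\<Union>g\<in>G. X \<inter> act g -` W)"
  then obtain g where "g \<in> G" "x \<in> X" "act g x \<in> W" by blast
  moreover have "orbit G act x = orbit G act (act g x)"
    using \<open>g \<in> G\<close> orbit_eq_iff by blast
  ultimately show "x \<in> {x \<in> X. orbit G act x \<in> orbit G act ` W}" by blast
qed

lemma open_map_orbit: "open_map (top_of_set X) orbit_space (orbit G act)"
proof (rule open_map_quotient_topology)
  fix W assume "openin (top_of_set X) W"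
  then have W: "open W" "W \<subseteq> X"
    using open_X openin_open_eq by auto
  have "open (\<Union>g\<in>G. X \<inter> act g -` W)"
    using W open_X continuous_on_act by (intro open_UN ballI continuous_open_preimage) auto
  then show "openin (top_of_set X) {x \<in> topspace (top_of_set X). orbit G act x \<in> orbit G act ` W}"
    using orbit_saturation[OF W(2)] by (simp add: openin_open_eq[OF open_X])
qed

lemma openin_orbit_space_image: "open W \<Longrightarrow> W \<subseteq> X \<Longrightarrow> openin orbit_space (orbit G act ` W)"
  using open_map_orbit open_X openin_open_eq unfolding open_map_def by blast

lemma topspace_orbit_space: "topspace orbit_space = orbit G act ` X"
  by (simp add: topspace_quotient_topology)

lemma compact_space_orbit_space:
  assumes "compact C" "C \<subseteq> X" and meets_orbits: "\<And>x. x \<in> X \<Longrightarrow> \<exists>g\<in>G. act g x \<in> C"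
  shows "compact_space orbit_space"
proof -
  have "orbit G act x \<in> orbit G act ` C" if x: "x \<in> X" for x
  proof -
    obtain g where "g \<in> G" "act g x \<in> C"
      using meets_orbits[OF x] by blast
    then show ?thesis
      using orbit_eq_iff by blast
  qed
  then have "orbit G act ` C = topspace orbit_space"
    using assms(2) by (auto simp: topspace_orbit_space)
  moreover have "compactin orbit_space (orbit G act ` C)"
    using assms(1,2) by (intro image_compactin[OF _ continuous_map_quotient_topology])
      (simp add: compactin_subtopology)
  ultimately show ?thesis
    by (simp add: compact_space_def)
qed

lemma second_countable_orbit_space:
  assumes "second_countable (euclidean :: 'a topology)"
  shows "second_countable orbit_space"
proof (rule second_countable_open_map_image[OF continuous_map_quotient_topology open_map_orbit])
  show "second_countable (top_of_set X)"
    using assms by (rule second_countable_subtopology)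
qed (simp add: topspace_orbit_space)

lemma homeomorphic_map_orbit:
  assumes "open U" "U \<subseteq> X" "inj_on (orbit G act) U"
  shows "homeomorphic_map (top_of_set U) (subtopology orbit_space (orbit G act ` U)) (orbit G act)"
proof (rule bijective_open_imp_homeomorphic_map)
  have "continuous_map (top_of_set U) orbit_space (orbit G act)"
    using continuous_map_from_subtopology[OF continuous_map_quotient_topology, of "top_of_set X" U]
    by (simp add: subtopology_subtopology Int_absorb1 assms(2))
  then show "continuous_map (top_of_set U) (subtopology orbit_space (orbit G act ` U)) (orbit G act)"
    by (simp add: continuous_map_in_subtopology)
  show "open_map (top_of_set U) (subtopology orbit_space (orbit G act ` U)) (orbit G act)"
    unfolding open_map_def
  proof clarify
    fix W assume "openin (top_of_set U) W"
    then have "open W" "W \<subseteq> U"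
      using openin_open_eq[OF assms(1)] by simp_all
    then have "openin orbit_space (orbit G act ` W)"
      using assms(2) by (intro openin_orbit_space_image) auto
    then show "openin (subtopology orbit_space (orbit G act ` U)) (orbit G act ` W)"
      using \<open>W \<subseteq> U\<close> by (auto simp: openin_subtopology)
  qed
  show "orbit G act ` topspace (top_of_set U) = topspace (subtopology orbit_space (orbit G act ` U))"
    using assms(2) by (auto simp: topspace_orbit_space)
  show "inj_on (orbit G act) (topspace (top_of_set U))"
    using assms(3) by simp
qed

end

lemma eventually_ball_image_disjoint:
  fixes f :: "'a::metric_space \<Rightarrow> 'b::metric_space"
  assumes "isCont f p" "f p \<noteq> q"
  shows "\<forall>\<^sub>F \<delta> in at_right 0. \<forall>a\<in>ball p \<delta>. f a \<notin> ball q \<delta>"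
proof -
  define e where "e = dist (f p) q"
  have "e > 0"
    using assms(2) by (simp add: e_def)
  then obtain d where "d > 0" and d: "\<And>a. dist a p < d \<Longrightarrow> dist (f a) (f p) < e / 2"
    using assms(1) unfolding continuous_at_eps_delta by (meson half_gt_zero)
  have "\<forall>a\<in>ball p \<delta>. f a \<notin> ball q \<delta>" if "\<delta> < min d (e / 2)" for \<delta>
  proof (intro ballI notI)
    fix a assume "a \<in> ball p \<delta>" "f a \<in> ball q \<delta>"
    then have "dist (f a) (f p) < e / 2" "dist (f a) q < e / 2"
      using that d by (auto simp: dist_commute)
    then show False
      using dist_triangle[of "f p" q "f a"] by (simp add: e_def dist_commute)
  qed
  then show ?thesis
    unfolding eventually_at_right_field using \<open>d > 0\<close> \<open>e > 0\<close>
    by (intro exI[of _ "min d (e / 2)"]) auto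
qed

locale properly_discontinuous_action =
  continuous_group_action G act X gmul ginv gone
  for G and act :: "'g \<Rightarrow> 'a::heine_borel \<Rightarrow> 'a" and X gmul ginv gone +
  assumes properly_discontinuous: "properly_discontinuous G act X"
begin

lemma eventually_separating_balls:
  assumes "p \<in> X" "r > 0" "cball p r \<subseteq> X" "cball p' r \<subseteq> X"
  shows "\<forall>\<^sub>F \<delta> in at_right 0. \<forall>g\<in>G. act g p \<noteq> p' \<longrightarrow> (\<forall>a\<in>ball p \<delta>. act g a \<notin> ball p' \<delta>)"
proof -
  (* For \<delta> < r only the finitely many g moving K into itself can bring ball p \<delta> into
     ball p' \<delta>, and each of those is excluded for small \<delta> by continuity at p. *)
  define K where "K = cball p r \<union> cball p' r"
  have "compact K" "K \<subseteq> X"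
    using assms(3,4) by (auto simp: K_def)
  then have "finite {g \<in> G. act g ` K \<inter> K \<noteq> {}}" (is "finite ?F")
    using properly_discontinuous unfolding properly_discontinuous_def by blast
  have near: "\<forall>\<^sub>F \<delta> in at_right 0. \<forall>a\<in>ball p \<delta>. act g a \<notin> ball p' \<delta>"
    if "g \<in> G" "act g p \<noteq> p'" for g
    using that open_X assms(1) continuous_on_act
    by (intro eventually_ball_image_disjoint) (auto simp: continuous_on_eq_continuous_at)
  have close_to_p: "\<forall>\<^sub>F \<delta> in at_right 0.
      \<forall>g\<in>{g \<in> ?F. act g p \<noteq> p'}. \<forall>a\<in>ball p \<delta>. act g a \<notin> ball p' \<delta>"
  proof (rule eventually_ball_finite)
    show "finite {g \<in> ?F. act g p \<noteq> p'}"
      by (rule finite_subset[OF _ \<open>finite ?F\<close>]) blast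
  qed (use near in blast)
  have below_r: "\<forall>\<^sub>F \<delta> in at_right 0. \<delta> < r"
    unfolding eventually_at_right_field using \<open>r > 0\<close> by blast
  have outside_F: "act g a \<notin> ball p' \<delta>"
    if "\<delta> < r" "g \<in> G" "g \<notin> ?F" "a \<in> ball p \<delta>" for g a \<delta>
  proof
    assume "act g a \<in> ball p' \<delta>"
    then have "a \<in> K" "act g a \<in> K"
      using that(1,4) unfolding K_def by auto
    then show False
      using that(2,3) by blast
  qed
  show ?thesis
    using close_to_p below_r by eventually_elim (use outside_F in blast)
qed

lemma separating_balls:
  assumes "p \<in> X" "p' \<in> X"
  obtains \<delta> where "\<delta> > 0" "ball p \<delta> \<subseteq> X" "ball p' \<delta> \<subseteq> X"
    "\<And>g a. g \<in> G \<Longrightarrow> act g p \<noteq> p' \<Longrightarrow> a \<in> ball p \<delta> \<Longrightarrow> act g a \<notin> ball p' \<delta>"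
proof -
  obtain r1 r2 where "r1 > 0" "cball p r1 \<subseteq> X" "r2 > 0" "cball p' r2 \<subseteq> X"
    using open_X assms open_contains_cball by metis
  then have r: "min r1 r2 > 0" "cball p (min r1 r2) \<subseteq> X" "cball p' (min r1 r2) \<subseteq> X"
    by auto
  have "\<forall>\<^sub>F \<delta> in at_right 0. 0 < \<delta> \<and> \<delta> < min r1 r2"
    unfolding eventually_at_right_field using r(1) by blast
  then obtain \<delta> where "0 < \<delta>" "\<delta> < min r1 r2"
    and "\<forall>g\<in>G. act g p \<noteq> p' \<longrightarrow> (\<forall>a\<in>ball p \<delta>. act g a \<notin> ball p' \<delta>)"
    using eventually_happens'[OF trivial_limit_at_right_real
        eventually_conj[OF _ eventually_separating_balls[OF assms(1) r]]] by blast
  moreover have "ball p \<delta> \<subseteq> X" "ball p' \<delta> \<subseteq> X"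
    using r \<open>\<delta> < min r1 r2\<close> by (auto simp: subset_iff)
  ultimately show thesis
    using that by blast
qed

lemma Hausdorff_space_orbit_space: "Hausdorff_space orbit_space"
  unfolding Hausdorff_space_def topspace_orbit_space
proof clarify
  fix p p' assume "p \<in> X" "p' \<in> X" and ne: "orbit G act p \<noteq> orbit G act p'"
  obtain \<delta> where "\<delta> > 0" "ball p \<delta> \<subseteq> X" "ball p' \<delta> \<subseteq> X"
    and sep: "\<And>g a. g \<in> G \<Longrightarrow> a \<in> ball p \<delta> \<Longrightarrow> act g a \<notin> ball p' \<delta>"
    using separating_balls[OF \<open>p \<in> X\<close> \<open>p' \<in> X\<close>] ne orbit_eq_iff by metis
  have "disjnt (orbit G act ` ball p \<delta>) (orbit G act ` ball p' \<delta>)"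
    using sep by (force simp: disjnt_def orbit_eq_iff)
  moreover have "openin orbit_space (orbit G act ` ball p \<delta>)" "openin orbit_space (orbit G act ` ball p' \<delta>)"
    using \<open>ball p \<delta> \<subseteq> X\<close> \<open>ball p' \<delta> \<subseteq> X\<close> by (simp_all add: openin_orbit_space_image)
  ultimately show "\<exists>U V. openin orbit_space U \<and> openin orbit_space V \<and>
      orbit G act p \<in> U \<and> orbit G act p' \<in> V \<and> disjnt U V"
    using \<open>\<delta> > 0\<close> by (meson centre_in_ball imageI)
qed

lemma orbit_space_locally_homeomorphic:
  assumes free: "\<And>g x. g \<in> G \<Longrightarrow> x \<in> X \<Longrightarrow> act g x = x \<Longrightarrow> g = gone"
    and "y \<in> topspace orbit_space"
  shows "\<exists>U. openin orbit_space U \<and> y \<in> U \<and>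
    (\<exists>V :: 'a set. open V \<and> subtopology orbit_space U homeomorphic_space top_of_set V)"
proof -
  obtain p where "p \<in> X" "y = orbit G act p"
    using assms(2) topspace_orbit_space by auto
  obtain \<delta> where "\<delta> > 0" "ball p \<delta> \<subseteq> X"
    and sep: "\<And>g a. g \<in> G \<Longrightarrow> act g p \<noteq> p \<Longrightarrow> a \<in> ball p \<delta> \<Longrightarrow> act g a \<notin> ball p \<delta>"
    using separating_balls[OF \<open>p \<in> X\<close> \<open>p \<in> X\<close>] by metis
  have "inj_on (orbit G act) (ball p \<delta>)"
  proof
    fix a b assume "a \<in> ball p \<delta>" "b \<in> ball p \<delta>" "orbit G act a = orbit G act b"
    then obtain g where "g \<in> G" "b = act g a"
      using orbit_eq_iff by blast
    then have "act g p = p"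
      using sep \<open>a \<in> ball p \<delta>\<close> \<open>b \<in> ball p \<delta>\<close> by blast
    then have "g = gone"
      using free \<open>g \<in> G\<close> \<open>p \<in> X\<close> by blast
    then show "a = b"
      using \<open>b = act g a\<close> by (simp add: act_gone)
  qed
  then have "homeomorphic_map (top_of_set (ball p \<delta>))
      (subtopology orbit_space (orbit G act ` ball p \<delta>)) (orbit G act)"
    using \<open>ball p \<delta> \<subseteq> X\<close> by (intro homeomorphic_map_orbit) auto
  then have "subtopology orbit_space (orbit G act ` ball p \<delta>) homeomorphic_space top_of_set (ball p \<delta>)"
    using homeomorphic_map_imp_homeomorphic_space homeomorphic_space_sym by blast
  moreover have "openin orbit_space (orbit G act ` ball p \<delta>)"
    using \<open>ball p \<delta> \<subseteq> X\<close> by (simp add: openin_orbit_space_image)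
  moreover have "y \<in> orbit G act ` ball p \<delta>"
    using \<open>y = orbit G act p\<close> \<open>\<delta> > 0\<close> by simp
  ultimately show ?thesis
    by blast
qed

end

section \<open>Integer powers of commuting automorphisms\<close>

lemma zpow_fun_0 [simp]: "zpow_fun f 0 = id"
  by (simp add: zpow_fun_def)

lemma zpow_fun_succ:
  assumes "bij f"
  shows "zpow_fun f (a + 1) = f \<circ> zpow_fun f a"
proof -
  have f_inv: "f \<circ> inv f = id"
    using assms bij_is_surj surj_iff by blast
  consider "0 \<le> a" | "a = -1" | "a < -1"
    by linarith
  then show ?thesis
  proof cases
    case 1
    then have "nat (a + 1) = Suc (nat a)" by simp
    with 1 show ?thesis by (simp add: zpow_fun_def)
  next
    case 2
    then show ?thesis by (simp add: zpow_fun_def f_inv)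
  next
    case 3
    then have "nat (- a) = Suc (nat (- (a + 1)))" by simp
    with 3 show ?thesis by (simp add: zpow_fun_def o_assoc f_inv)
  qed
qed

lemma zpow_fun_pred:
  assumes "bij f"
  shows "zpow_fun f (a - 1) = inv f \<circ> zpow_fun f a"
proof -
  have "inv f \<circ> f = id"
    using assms bij_is_inj inj_iff by blast
  moreover have "zpow_fun f a = f \<circ> zpow_fun f (a - 1)"
    using zpow_fun_succ[OF assms, of "a - 1"] by simp
  ultimately show ?thesis
    by (simp add: o_assoc)
qed

lemma zpow_fun_add:
  assumes "bij f"
  shows "zpow_fun f (a + b) = zpow_fun f b \<circ> zpow_fun f a"
proof (induction b rule: int_induct[where k = 0])
  case (step1 i)
  have "zpow_fun f (a + (i + 1)) = f \<circ> zpow_fun f (a + i)"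
    using zpow_fun_succ[OF assms, of "a + i"] by (simp add: algebra_simps)
  then show ?case
    using step1 by (simp add: zpow_fun_succ[OF assms] o_assoc)
next
  case (step2 i)
  have "zpow_fun f (a + (i - 1)) = inv f \<circ> zpow_fun f (a + i)"
    using zpow_fun_pred[OF assms, of "a + i"] by (simp add: algebra_simps)
  then show ?case
    using step2 by (simp add: zpow_fun_pred[OF assms] o_assoc)
qed simp

lemma zpow_fun_commute:
  assumes "bij f" "g \<circ> f = f \<circ> g"
  shows "g \<circ> zpow_fun f a = zpow_fun f a \<circ> g"
proof (induction a rule: int_induct[where k = 0])
  case (step1 i)
  have "g \<circ> zpow_fun f (i + 1) = (g \<circ> f) \<circ> zpow_fun f i"
    by (simp only: zpow_fun_succ[OF assms(1)] o_assoc)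
  also have "\<dots> = f \<circ> (g \<circ> zpow_fun f i)"
    by (simp only: assms(2) o_assoc)
  also have "\<dots> = zpow_fun f (i + 1) \<circ> g"
    by (simp only: step1 zpow_fun_succ[OF assms(1)] o_assoc)
  finally show ?case .
next
  case (step2 i)
  have "g \<circ> inv f = inv f \<circ> g"
    using assms by (metis bij_is_inj bij_is_surj inv_o_cancel o_assoc o_id surj_iff)
  then have "g \<circ> zpow_fun f (i - 1) = inv f \<circ> (g \<circ> zpow_fun f i)"
    by (simp only: zpow_fun_pred[OF assms(1)] o_assoc)
  also have "\<dots> = zpow_fun f (i - 1) \<circ> g"
    by (simp only: step2 zpow_fun_pred[OF assms(1)] o_assoc)
  finally show ?case .
qed simp

lemma linear_zpow_fun:
  fixes f :: "'e::euclidean_space \<Rightarrow> 'e"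
  assumes "linear f" "bij f"
  shows "linear (zpow_fun f a)"
proof -
  have "linear (inv f)"
    using assms bij_is_inj inj_linear_imp_inv_linear by blast
  moreover have "linear (g ^^ n)" if "linear g" for g :: "'e \<Rightarrow> 'e" and n
    using that by (induction n) (auto intro: linear_compose linear_id)
  ultimately show ?thesis
    using assms by (simp add: zpow_fun_def)
qed

lemma zpow_fun_image_eq:
  assumes "bij f" "f ` L = L"
  shows "zpow_fun f a ` L = L"
proof -
  have "(g ^^ n) ` L = L" if "g ` L = L" for g :: "'a \<Rightarrow> 'a" and n
  proof (induction n)
    case (Suc n)
    have "(g ^^ Suc n) ` L = g ` (g ^^ n) ` L"
      by (simp add: image_comp)
    then show ?case
      using Suc that by simp
  qed simp
  moreover have "inv f ` L = L"
    using assms by (metis bij_is_inj image_inv_f_f)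
  ultimately show ?thesis
    using assms by (simp add: zpow_fun_def)
qed

definition zpow_comp :: "('s \<Rightarrow> 'e \<Rightarrow> 'e) \<Rightarrow> ('s \<Rightarrow> int) \<Rightarrow> 's set \<Rightarrow> 'e \<Rightarrow> 'e" where
  "zpow_comp A n I = Finite_Set.fold (\<lambda>i f. zpow_fun (A i) (n i) \<circ> f) id I"

lemma Apow_eq_zpow_comp: "Apow A n = zpow_comp A n UNIV"
  by (simp add: Apow_def zpow_comp_def)

lemma zpow_comp_empty [simp]: "zpow_comp A n {} = id"
  by (simp add: zpow_comp_def)

locale commuting_linear_automorphisms =
  fixes A :: "'s::finite \<Rightarrow> 'e::euclidean_space \<Rightarrow> 'e"
  assumes linear_A: "linear (A i)"
    and bij_A: "bij (A i)"
    and A_commute: "A i \<circ> A j = A j \<circ> A i"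
begin

lemma zpow_fun_A_commute: "zpow_fun (A i) a \<circ> zpow_fun (A j) b = zpow_fun (A j) b \<circ> zpow_fun (A i) a"
proof -
  have "A j \<circ> zpow_fun (A i) a = zpow_fun (A i) a \<circ> A j"
    by (rule zpow_fun_commute[OF bij_A A_commute])
  then show ?thesis
    by (intro zpow_fun_commute[OF bij_A]) simp
qed

lemma zpow_comp_insert:
  assumes "finite I" "i \<notin> I"
  shows "zpow_comp A n (insert i I) = zpow_fun (A i) (n i) \<circ> zpow_comp A n I"
proof -
  have "comp_fun_commute_on UNIV (\<lambda>i f. zpow_fun (A i) (n i) \<circ> f)"
    by unfold_locales (simp add: fun_eq_iff zpow_fun_A_commute[unfolded fun_eq_iff o_def])
  then show ?thesis
    unfolding zpow_comp_def by (rule comp_fun_commute_on.fold_insert) (use assms in auto)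
qed

lemma zpow_comp_A_commute: "finite I \<Longrightarrow> zpow_comp A n I \<circ> A j = A j \<circ> zpow_comp A n I"
proof (induction I rule: finite_induct)
  case (insert i I)
  have swap: "zpow_fun (A i) (n i) \<circ> A j = A j \<circ> zpow_fun (A i) (n i)"
    using zpow_fun_commute[OF bij_A A_commute, of j i "n i"] by simp
  have "zpow_comp A n (insert i I) \<circ> A j = zpow_fun (A i) (n i) \<circ> (zpow_comp A n I \<circ> A j)"
    by (simp only: zpow_comp_insert[OF insert(1,2)] o_assoc)
  also have "\<dots> = (zpow_fun (A i) (n i) \<circ> A j) \<circ> zpow_comp A n I"
    by (simp only: insert(3) o_assoc)
  also have "\<dots> = A j \<circ> zpow_comp A n (insert i I)"
    by (simp only: swap zpow_comp_insert[OF insert(1,2)] o_assoc)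
  finally show ?case .
qed simp

lemma zpow_comp_add:
  "finite I \<Longrightarrow> zpow_comp A (\<lambda>k. n k + m k) I = zpow_comp A n I \<circ> zpow_comp A m I"
proof (induction I rule: finite_induct)
  case (insert i I)
  have swap: "zpow_comp A n I \<circ> zpow_fun (A i) (m i) = zpow_fun (A i) (m i) \<circ> zpow_comp A n I"
    by (rule zpow_fun_commute[OF bij_A zpow_comp_A_commute[OF insert(1)]])
  have "zpow_comp A (\<lambda>k. n k + m k) (insert i I)
      = zpow_fun (A i) (m i + n i) \<circ> (zpow_comp A n I \<circ> zpow_comp A m I)"
    by (simp only: zpow_comp_insert[OF insert(1,2)] insert(3) add.commute[of "n i" "m i"])
  also have "\<dots> = zpow_fun (A i) (n i) \<circ> (zpow_fun (A i) (m i) \<circ> zpow_comp A n I) \<circ> zpow_comp A m I"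
    by (simp only: zpow_fun_add[OF bij_A] o_assoc)
  also have "\<dots> = zpow_comp A n (insert i I) \<circ> zpow_comp A m (insert i I)"
    by (simp only: zpow_comp_insert[OF insert(1,2)] swap[symmetric] o_assoc)
  finally show ?case .
qed simp

lemma zpow_comp_zero: "finite I \<Longrightarrow> zpow_comp A (\<lambda>_. 0) I = id"
  by (induction I rule: finite_induct) (simp_all add: zpow_comp_insert)

lemma linear_zpow_comp: "finite I \<Longrightarrow> linear (zpow_comp A n I)"
proof (induction I rule: finite_induct)
  case (insert i I)
  show ?case
    unfolding zpow_comp_insert[OF insert(1,2)]
    by (rule linear_compose[OF insert(3) linear_zpow_fun[OF linear_A bij_A]])
qed (simp only: zpow_comp_empty linear_id)

lemma zpow_comp_image_eq:
  assumes "\<And>i. A i ` L = L"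
  shows "finite I \<Longrightarrow> zpow_comp A n I ` L = L"
proof (induction I rule: finite_induct)
  case (insert i I)
  show ?case
    unfolding zpow_comp_insert[OF insert(1,2)] image_comp[symmetric] insert(3)
    by (rule zpow_fun_image_eq[OF bij_A assms])
qed simp

lemma Apow_add: "Apow A (\<lambda>k. n k + m k) = Apow A n \<circ> Apow A m"
  by (simp add: Apow_eq_zpow_comp zpow_comp_add)

lemma Apow_zero [simp]: "Apow A (\<lambda>_. 0) = id"
  by (simp add: Apow_eq_zpow_comp zpow_comp_zero)

lemma linear_Apow: "linear (Apow A n)"
  by (simp add: Apow_eq_zpow_comp linear_zpow_comp)

lemma bounded_linear_Apow: "bounded_linear (Apow A n)"
  using linear_Apow linear_conv_bounded_linear by blast

lemma Apow_image_eq: "(\<And>i. A i ` L = L) \<Longrightarrow> Apow A n ` L = L"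
  by (simp add: Apow_eq_zpow_comp zpow_comp_image_eq)

end

section \<open>Lattices spanned by a basis\<close>

lemma int_span_add:
  assumes "a \<in> int_span B" "b \<in> int_span B"
  shows "a + b \<in> int_span B"
proof -
  obtain c d where "a = (\<Sum>v\<in>B. real_of_int (c v) *\<^sub>R v)" "b = (\<Sum>v\<in>B. real_of_int (d v) *\<^sub>R v)"
    using assms unfolding int_span_def by blast
  then show ?thesis
    unfolding int_span_def
    by (auto intro!: exI[of _ "\<lambda>v. c v + d v"] simp: scaleR_add_left sum.distrib)
qed

lemma int_span_uminus:
  assumes "a \<in> int_span B"
  shows "- a \<in> int_span B"
proof -
  obtain c where "a = (\<Sum>v\<in>B. real_of_int (c v) *\<^sub>R v)"
    using assms unfolding int_span_def by blast
  then show ?thesis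
    unfolding int_span_def by (auto intro!: exI[of _ "\<lambda>v. - c v"] simp: sum_negf)
qed

lemma representation_sum_basis:
  fixes B :: "'a::real_vector set"
  assumes "independent B" "finite B" "b \<in> B"
  shows "representation B (\<Sum>v\<in>B. c v *\<^sub>R v) b = c b"
proof -
  have "representation B (\<Sum>v\<in>B. c v *\<^sub>R v) b = (\<Sum>v\<in>B. c v * representation B v b)"
    using assms(1)
    by (simp add: real_vector.representation_sum real_vector.representation_scale
        real_vector.span_base real_vector.span_scale)
  also have "\<dots> = (\<Sum>v\<in>B. if v = b then c v else 0)"
    by (intro sum.cong) (auto simp: real_vector.representation_basis[OF assms(1)])
  also have "\<dots> = c b"
    using assms(2,3) by simp
  finally show ?thesis .
qed

lemma linear_representation:
  assumes "independent B" "span B = UNIV"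
  shows "linear (\<lambda>v. representation B v b)"
  by (rule linearI)
    (simp_all add: real_vector.representation_add real_vector.representation_scale assms)

lemma finite_int_span_bounded:
  fixes B :: "'e::euclidean_space set"
  assumes "independent B" "span B = UNIV"
  shows "finite {l \<in> int_span B. norm l \<le> R}"
proof -
  have "finite B"
    using assms(1) independent_imp_finite by blast
  define K where "K b = onorm (\<lambda>v. representation B v b)" for b
  define N where "N b = \<lceil>K b * R\<rceil>" for b
  have bounded: "bounded_linear (\<lambda>v. representation B v b)" for b
    using linear_representation[OF assms] linear_conv_bounded_linear by blast
  have coeff_bound: "\<bar>representation B v b\<bar> \<le> K b * norm v" for v b
    unfolding K_def using onorm[OF bounded] by (simp add: mult.commute)
  have "{l \<in> int_span B. norm l \<le> R} \<subseteq>
      (\<lambda>c. \<Sum>b\<in>B. real_of_int (c b) *\<^sub>R b) ` (\<Pi>\<^sub>E b\<in>B. {-N b..N b})"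
  proof
    fix l assume "l \<in> {l \<in> int_span B. norm l \<le> R}"
    then obtain c where l: "l = (\<Sum>b\<in>B. real_of_int (c b) *\<^sub>R b)" and "norm l \<le> R"
      unfolding int_span_def by blast
    have "\<bar>c b\<bar> \<le> N b" if "b \<in> B" for b
    proof -
      have "K b \<ge> 0"
        unfolding K_def using bounded by (rule onorm_pos_le)
      have "\<bar>real_of_int (c b)\<bar> = \<bar>representation B l b\<bar>"
        using representation_sum_basis[OF assms(1) \<open>finite B\<close> that] l by simp
      also have "\<dots> \<le> K b * norm l"
        by (rule coeff_bound)
      also have "\<dots> \<le> K b * R"
        using \<open>norm l \<le> R\<close> \<open>K b \<ge> 0\<close> by (rule mult_left_mono)
      finally show ?thesis
        unfolding N_def by linarith
    qed
    then have "restrict c B \<in> (\<Pi>\<^sub>E b\<in>B. {-N b..N b})"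
      by (auto simp: abs_le_iff minus_le_iff)
    moreover have "l = (\<Sum>b\<in>B. real_of_int (restrict c B b) *\<^sub>R b)"
      using l by simp
    ultimately show "l \<in> (\<lambda>c. \<Sum>b\<in>B. real_of_int (c b) *\<^sub>R b) ` (\<Pi>\<^sub>E b\<in>B. {-N b..N b})"
      by blast
  qed
  moreover have "finite (\<Pi>\<^sub>E b\<in>B. {-N b..N b})"
    using \<open>finite B\<close> by (intro finite_PiE) auto
  ultimately show ?thesis
    using finite_subset by blast
qed

lemma sum_range_reindex:
  fixes w :: "'i::finite \<Rightarrow> 'a::real_vector"
  assumes "inj w"
  shows "(\<Sum>i\<in>UNIV. c i *\<^sub>R w i) = (\<Sum>v\<in>range w. c (inv w v) *\<^sub>R v)"
  using assms by (simp add: sum.reindex)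

lemma inj_int_combinations:
  fixes w :: "'i::finite \<Rightarrow> 'a::real_vector"
  assumes "inj w" "independent (range w)"
  shows "inj (\<lambda>n :: 'i \<Rightarrow> int. \<Sum>i\<in>UNIV. of_int (n i) *\<^sub>R w i)"
proof (rule injI)
  fix n m :: "'i \<Rightarrow> int"
  assume eq: "(\<Sum>i\<in>UNIV. of_int (n i) *\<^sub>R w i) = (\<Sum>i\<in>UNIV. of_int (m i) *\<^sub>R w i)"
  have coeff: "representation (range w) (\<Sum>i\<in>UNIV. of_int (k i) *\<^sub>R w i) (w i) = of_int (k i)"
    for k :: "'i \<Rightarrow> int" and i
    using representation_sum_basis[OF assms(2) finite_imageI[OF finite] rangeI, of "\<lambda>v. of_int (k (inv w v))"]
    by (simp add: sum_range_reindex[OF assms(1)] assms(1))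
  have "real_of_int (n i) = real_of_int (m i)" for i
    using coeff[of n i] coeff[of m i] eq by simp
  then show "n = m"
    by (simp add: fun_eq_iff)
qed

lemma finite_int_combinations_bounded:
  fixes w :: "'i::finite \<Rightarrow> 'e::euclidean_space"
  assumes "inj w" "independent (range w)" "span (range w) = UNIV"
  shows "finite {n. norm (\<Sum>i\<in>UNIV. of_int (n i) *\<^sub>R w i) \<le> R}"
proof (rule finite_imageD)
  let ?comb = "\<lambda>n :: 'i \<Rightarrow> int. \<Sum>i\<in>UNIV. of_int (n i) *\<^sub>R w i"
  have "?comb n \<in> int_span (range w)" for n
    unfolding int_span_def sum_range_reindex[OF assms(1)]
    by (auto intro!: exI[of _ "\<lambda>v. n (inv w v)"])
  then have "?comb ` {n. norm (?comb n) \<le> R} \<subseteq> {l \<in> int_span (range w). norm l \<le> R}"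
    by blast
  then show "finite (?comb ` {n. norm (?comb n) \<le> R})"
    using finite_int_span_bounded[OF assms(2,3)] finite_subset by blast
  show "inj_on ?comb {n. norm (?comb n) \<le> R}"
    using inj_int_combinations[OF assms(1,2)] by (simp add: inj_on_def)
qed

lemma spanning_family_coefficients:
  fixes w :: "'i::finite \<Rightarrow> 'a::real_vector"
  assumes "inj w" "span (range w) = UNIV"
  obtains u where "y = (\<Sum>i\<in>UNIV. u i *\<^sub>R w i)"
proof -
  obtain c where "y = (\<Sum>v\<in>range w. c v *\<^sub>R v)"
    using real_vector.span_finite[of "range w"] assms(2) by auto
  also have "\<dots> = (\<Sum>i\<in>UNIV. c (w i) *\<^sub>R w i)"
    by (rule sum.reindex[OF assms(1), unfolded o_def])
  finally show thesis
    by (rule that)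
qed

lemma norm_sum_frac_le: "norm ((\<Sum>i\<in>I. u i *\<^sub>R v i) - (\<Sum>i\<in>I. of_int \<lfloor>u i\<rfloor> *\<^sub>R v i)) \<le> (\<Sum>i\<in>I. norm (v i))"
proof -
  have "(\<Sum>i\<in>I. u i *\<^sub>R v i) - (\<Sum>i\<in>I. of_int \<lfloor>u i\<rfloor> *\<^sub>R v i) = (\<Sum>i\<in>I. frac (u i) *\<^sub>R v i)"
    by (simp add: frac_def scaleR_diff_left sum_subtractf)
  also have "norm \<dots> \<le> (\<Sum>i\<in>I. norm (frac (u i) *\<^sub>R v i))"
    by (rule norm_sum)
  also have "\<dots> \<le> (\<Sum>i\<in>I. norm (v i))"
    by (intro sum_mono) (simp add: frac_ge_0 frac_lt_1 less_imp_le mult_left_le_one_le)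
  finally show ?thesis .
qed

section \<open>The twisted diagonal action\<close>

definition vec_ln :: "real^'n \<Rightarrow> real^'n" where
  "vec_ln x = (\<chi> j. ln (x $ j))"

definition vec_exp :: "real^'n \<Rightarrow> real^'n" where
  "vec_exp y = (\<chi> j. exp (y $ j))"

lemma vec_exp_vec_ln: "(\<And>j. 0 < x $ j) \<Longrightarrow> vec_exp (vec_ln x) = x"
  by (simp add: vec_exp_def vec_ln_def vec_eq_iff)

lemma continuous_on_vec_exp: "continuous_on S vec_exp"
  unfolding vec_exp_def by (intro continuous_intros)

definition log_shift :: "('s::finite \<Rightarrow> real^'n) \<Rightarrow> ('s \<Rightarrow> int) \<Rightarrow> real^'n" where
  "log_shift \<xi> n = (\<Sum>i\<in>UNIV. of_int (n i) *\<^sub>R vec_ln (\<xi> i))"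

lemma tda_nondegenerate_iff:
  "tda_nondegenerate \<xi> \<longleftrightarrow>
     inj (\<lambda>i. vec_ln (\<xi> i)) \<and> independent (range (\<lambda>i. vec_ln (\<xi> i))) \<and>
     span (range (\<lambda>i. vec_ln (\<xi> i))) = UNIV"
  by (simp add: tda_nondegenerate_def vec_ln_def Let_def)

lemma open_tda_space: "open (tda_space :: ((real^'n) \<times> 'e::euclidean_space) set)"
proof -
  have eq: "(tda_space :: ((real^'n) \<times> 'e) set) = (\<Inter>j. {p. 0 < fst p $ j})"
    by (auto simp: tda_space_def)
  have "open {p :: (real^'n) \<times> 'e. 0 < fst p $ j}" for j
    by (intro open_Collect_less continuous_intros)
  then show ?thesis
    unfolding eq by (intro open_INT) auto
qed

definition tda_mul ::
    "('s::finite \<Rightarrow> 'e \<Rightarrow> 'e) \<Rightarrow> ('s \<Rightarrow> int) \<times> 'e \<Rightarrow> ('s \<Rightarrow> int) \<times> 'e \<Rightarrow> ('s \<Rightarrow> int) \<times> 'e::plus"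
  where "tda_mul A g h = ((\<lambda>k. fst g k + fst h k), Apow A (fst g) (snd h) + snd g)"

definition tda_inv :: "('s::finite \<Rightarrow> 'e \<Rightarrow> 'e) \<Rightarrow> ('s \<Rightarrow> int) \<times> 'e \<Rightarrow> ('s \<Rightarrow> int) \<times> 'e::uminus"
  where "tda_inv A g = ((\<lambda>k. - fst g k), - Apow A (\<lambda>k. - fst g k) (snd g))"

locale twisted_diagonal_action = commuting_linear_automorphisms A
  for A :: "'s::finite \<Rightarrow> 'e::euclidean_space \<Rightarrow> 'e" +
  fixes B :: "'e set" and \<xi> :: "'s \<Rightarrow> real^'s"
  assumes basis: "independent B" "span B = UNIV"
    and xi_pos: "0 < \<xi> i $ j"
    and A_lattice: "A i ` int_span B = int_span B"
begin

lemma vec_ln_tda_act: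
  assumes "p \<in> tda_space"
  shows "vec_ln (fst (tda_act \<xi> A g p)) = vec_ln (fst p) + log_shift \<xi> (fst g)"
proof -
  have "ln (fst p $ j * (\<Prod>i\<in>UNIV. (\<xi> i $ j) powi (fst g i)))
      = ln (fst p $ j) + (\<Sum>i\<in>UNIV. of_int (fst g i) * ln (\<xi> i $ j))" for j
  proof -
    have "ln ((\<xi> i $ j) powi (fst g i)) = of_int (fst g i) * ln (\<xi> i $ j)" for i
      using powr_real_of_int'[of "\<xi> i $ j" "fst g i"] xi_pos[of i j] by (simp flip: ln_powr)
    moreover have "0 < (\<Prod>i\<in>UNIV. (\<xi> i $ j) powi (fst g i))"
      using xi_pos by (intro prod_pos zero_less_power_int) auto
    moreover have "0 < fst p $ j"
      using \<open>p \<in> tda_space\<close> by (simp add: tda_space_def)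
    moreover have "\<xi> i $ j \<noteq> 0" for i
      using xi_pos[of i j] by simp
    ultimately show ?thesis
      by (simp add: ln_mult ln_prod[where f = "\<lambda>i. (\<xi> i $ j) powi (fst g i)"])
  qed
  then show ?thesis
    by (simp add: vec_ln_def log_shift_def tda_act_def vec_eq_iff)
qed

lemma tda_act_tda_mul: "tda_act \<xi> A g (tda_act \<xi> A h p) = tda_act \<xi> A (tda_mul A g h) p"
proof -
  have "\<xi> i $ j \<noteq> 0" for i j
    using xi_pos[of i j] by simp
  then have "(\<Prod>i\<in>UNIV. (\<xi> i $ j) powi (fst h i)) * (\<Prod>i\<in>UNIV. (\<xi> i $ j) powi (fst g i))
      = (\<Prod>i\<in>UNIV. (\<xi> i $ j) powi (fst g i + fst h i))" for j
    by (simp add: power_int_add prod.distrib mult.commute)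
  moreover have "Apow A (fst g) (Apow A (fst h) v + snd h) + snd g
      = Apow A (\<lambda>k. fst g k + fst h k) v + (Apow A (fst g) (snd h) + snd g)" for v
    by (simp add: Apow_add linear_add[OF linear_Apow])
  ultimately show ?thesis
    by (simp add: tda_act_def tda_mul_def mult.assoc)
qed

lemma tda_act_tda_inv: "tda_act \<xi> A (tda_inv A g) (tda_act \<xi> A g p) = p"
proof -
  have "\<xi> i $ j \<noteq> 0" for i j
    using xi_pos[of i j] by simp
  moreover have "Apow A (\<lambda>k. - fst g k) (Apow A (fst g) v) = v" for v
    using Apow_add[of "\<lambda>k. - fst g k" "fst g"] by (simp add: fun_eq_iff)
  ultimately show ?thesis
    unfolding tda_act_tda_mul
    by (simp add: tda_act_def tda_mul_def tda_inv_def power_int_minus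
        linear_add[OF linear_Apow] prod_inversef[symmetric])
qed

lemma Apow_in_int_span: "l \<in> int_span B \<Longrightarrow> Apow A n l \<in> int_span B"
  using Apow_image_eq[OF A_lattice] by blast

lemma tda_act_in_tda_space: "p \<in> tda_space \<Longrightarrow> tda_act \<xi> A g p \<in> tda_space"
  by (auto simp: tda_space_def tda_act_def xi_pos intro!: prod_pos mult_pos_pos zero_less_power_int)

lemma continuous_tda_act: "continuous_on S (tda_act \<xi> A g)"
  unfolding tda_act_def
  by (intro continuous_intros continuous_on_compose2[OF bounded_linear.continuous_on[OF bounded_linear_Apow]])
    auto

lemma tda_returning_element_bounds:
  assumes "p \<in> K" "tda_act \<xi> A (n, l) p \<in> K" "K \<subseteq> tda_space"
    and R0: "\<And>p. p \<in> K \<Longrightarrow> norm (vec_ln (fst p)) \<le> R0"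
    and R1: "\<And>p. p \<in> K \<Longrightarrow> norm (snd p) \<le> R1"
  shows "norm (log_shift \<xi> n) \<le> 2 * R0" "norm l \<le> R1 + onorm (Apow A n) * R1"
proof -
  define q where "q = tda_act \<xi> A (n, l) p"
  have "q \<in> K" "p \<in> tda_space"
    using assms(1-3) by (auto simp: q_def)
  have "log_shift \<xi> n = vec_ln (fst q) - vec_ln (fst p)"
    using vec_ln_tda_act[OF \<open>p \<in> tda_space\<close>] by (simp add: q_def)
  then have "norm (log_shift \<xi> n) \<le> norm (vec_ln (fst q)) + norm (vec_ln (fst p))"
    by (simp add: norm_triangle_ineq4)
  also have "\<dots> \<le> 2 * R0"
    using R0[OF \<open>p \<in> K\<close>] R0[OF \<open>q \<in> K\<close>] by simp
  finally show "norm (log_shift \<xi> n) \<le> 2 * R0" .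
  have "l = snd q - Apow A n (snd p)"
    by (simp add: q_def tda_act_def)
  then have "norm l \<le> norm (snd q) + norm (Apow A n (snd p))"
    by (simp add: norm_triangle_ineq4)
  also have "\<dots> \<le> R1 + onorm (Apow A n) * norm (snd p)"
    using R1[OF \<open>q \<in> K\<close>] onorm[OF bounded_linear_Apow] by (rule add_mono)
  also have "\<dots> \<le> R1 + onorm (Apow A n) * R1"
    using R1[OF \<open>p \<in> K\<close>] onorm_pos_le[OF bounded_linear_Apow] by (simp add: mult_left_mono)
  finally show "norm l \<le> R1 + onorm (Apow A n) * R1" .
qed

sublocale continuous_group_action "tda_group B" "tda_act \<xi> A" tda_space "tda_mul A" "tda_inv A" "(\<lambda>_. 0, 0)"
proof
  show "(\<lambda>_. 0, 0) \<in> tda_group B"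
    by (auto simp: tda_group_def int_span_def intro!: exI[of _ "\<lambda>_. 0"])
  fix g h :: "('s \<Rightarrow> int) \<times> 'e"
  assume "g \<in> tda_group B" "h \<in> tda_group B"
  then show "tda_mul A g h \<in> tda_group B"
    by (auto simp: tda_group_def tda_mul_def intro!: int_span_add Apow_in_int_span)
next
  fix g :: "('s \<Rightarrow> int) \<times> 'e"
  assume "g \<in> tda_group B"
  then show "tda_inv A g \<in> tda_group B"
    by (auto simp: tda_group_def tda_inv_def intro!: int_span_uminus Apow_in_int_span)
next
  fix x :: "(real^'s) \<times> 'e"
  show "tda_act \<xi> A (\<lambda>_. 0, 0) x = x"
    by (simp add: tda_act_def)
qed (use tda_act_tda_mul tda_act_tda_inv tda_act_in_tda_space continuous_tda_act open_tda_space in blast)+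

end

locale nondegenerate_twisted_diagonal_action = twisted_diagonal_action A B \<xi>
  for A :: "'s::finite \<Rightarrow> 'e::euclidean_space \<Rightarrow> 'e" and B \<xi> +
  assumes nondegenerate: "tda_nondegenerate \<xi>"
begin

lemma inj_log_shift: "inj (log_shift \<xi>)"
  using nondegenerate inj_int_combinations unfolding tda_nondegenerate_iff log_shift_def[abs_def]
  by blast

lemma finite_log_shift_bounded: "finite {n. norm (log_shift \<xi> n) \<le> R}"
  using nondegenerate finite_int_combinations_bounded unfolding tda_nondegenerate_iff log_shift_def
  by blast

lemma properly_discontinuous_tda: "properly_discontinuous (tda_group B) (tda_act \<xi> A) tda_space"
  unfolding properly_discontinuous_def
proof (intro allI impI, elim conjE)
  fix K :: "((real^'s) \<times> 'e) set"
  assume "compact K" "K \<subseteq> tda_space"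
  have "continuous_on tda_space (\<lambda>p :: (real^'s) \<times> 'e. vec_ln (fst p))"
    unfolding vec_ln_def by (intro continuous_intros) (auto simp: tda_space_def less_le)
  then have "bounded ((\<lambda>p. vec_ln (fst p)) ` K)"
    using \<open>compact K\<close> \<open>K \<subseteq> tda_space\<close>
    by (intro compact_imp_bounded compact_continuous_image) (rule continuous_on_subset)
  then obtain R0 where R0: "\<And>p. p \<in> K \<Longrightarrow> norm (vec_ln (fst p)) \<le> R0"
    unfolding bounded_iff by blast
  have "bounded (snd ` K)"
    using \<open>compact K\<close> by (intro compact_imp_bounded compact_continuous_image continuous_intros)
  then obtain R1 where R1: "\<And>p. p \<in> K \<Longrightarrow> norm (snd p) \<le> R1"
    unfolding bounded_iff by blast
  let ?bounded_elements = "Sigma {n. norm (log_shift \<xi> n) \<le> 2 * R0}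
    (\<lambda>n. {l \<in> int_span B. norm l \<le> R1 + onorm (Apow A n) * R1})"
  have "{g \<in> tda_group B. tda_act \<xi> A g ` K \<inter> K \<noteq> {}} \<subseteq> ?bounded_elements"
  proof
    fix g assume g: "g \<in> {g \<in> tda_group B. tda_act \<xi> A g ` K \<inter> K \<noteq> {}}"
    obtain n l where "g = (n, l)"
      by fastforce
    moreover obtain p where "p \<in> K" "tda_act \<xi> A g p \<in> K"
      using g by blast
    moreover have "l \<in> int_span B"
      using g \<open>g = (n, l)\<close> by (simp add: tda_group_def)
    ultimately show "g \<in> ?bounded_elements"
      using tda_returning_element_bounds[OF _ _ \<open>K \<subseteq> tda_space\<close> R0 R1] by simp
  qed
  moreover have "finite ?bounded_elements"
    using finite_log_shift_bounded finite_int_span_bounded[OF basis] by (intro finite_SigmaI)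
  ultimately show "finite {g \<in> tda_group B. tda_act \<xi> A g ` K \<inter> K \<noteq> {}}"
    by (rule finite_subset)
qed

lemma tda_act_free:
  assumes "p \<in> tda_space" "tda_act \<xi> A g p = p"
  shows "g = (\<lambda>_. 0, 0)"
proof -
  have "vec_ln (fst p) = vec_ln (fst p) + log_shift \<xi> (fst g)"
    using vec_ln_tda_act[OF assms(1), of g] assms(2) by simp
  then have "log_shift \<xi> (fst g) = log_shift \<xi> (\<lambda>_. 0)"
    by (simp add: log_shift_def)
  then have "fst g = (\<lambda>_. 0)"
    by (rule injD[OF inj_log_shift])
  moreover have "snd (tda_act \<xi> A g p) = snd p + snd g"
    using \<open>fst g = (\<lambda>_. 0)\<close> by (simp add: tda_act_def)
  then have "snd g = 0"
    using assms(2) by simp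
  ultimately show ?thesis
    by (simp add: prod_eq_iff)
qed

sublocale properly_discontinuous_action "tda_group B" "tda_act \<xi> A" tda_space "tda_mul A" "tda_inv A" "(\<lambda>_. 0, 0)"
  by unfold_locales (rule properly_discontinuous_tda)

lemma tda_act_into_fundamental_set:
  assumes "p \<in> tda_space"
  obtains g where "g \<in> tda_group B"
    "tda_act \<xi> A g p \<in> vec_exp ` cball 0 (\<Sum>i\<in>UNIV. norm (vec_ln (\<xi> i))) \<times> cball 0 (\<Sum>b\<in>B. norm b)"
proof -
  have "finite B"
    using basis(1) independent_imp_finite by blast
  obtain u where u: "vec_ln (fst p) = (\<Sum>i\<in>UNIV. u i *\<^sub>R vec_ln (\<xi> i))"
    using nondegenerate spanning_family_coefficients unfolding tda_nondegenerate_iff by metis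
  define n where "n i = - \<lfloor>u i\<rfloor>" for i
  obtain u' where u': "Apow A n (snd p) = (\<Sum>b\<in>B. u' b *\<^sub>R b)"
    using real_vector.span_finite[OF \<open>finite B\<close>] basis(2) by blast
  define l where "l = - (\<Sum>b\<in>B. of_int \<lfloor>u' b\<rfloor> *\<^sub>R b)"
  have "l \<in> int_span B"
    unfolding l_def by (rule int_span_uminus) (auto simp: int_span_def)
  then have "(n, l) \<in> tda_group B"
    by (simp add: tda_group_def)
  have "vec_ln (fst (tda_act \<xi> A (n, l) p))
      = (\<Sum>i\<in>UNIV. u i *\<^sub>R vec_ln (\<xi> i)) - (\<Sum>i\<in>UNIV. of_int \<lfloor>u i\<rfloor> *\<^sub>R vec_ln (\<xi> i))"
    using vec_ln_tda_act[OF assms] u by (simp add: log_shift_def n_def sum_negf)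
  then have "vec_ln (fst (tda_act \<xi> A (n, l) p)) \<in> cball 0 (\<Sum>i\<in>UNIV. norm (vec_ln (\<xi> i)))"
    using norm_sum_frac_le by simp
  moreover have "vec_exp (vec_ln (fst (tda_act \<xi> A (n, l) p))) = fst (tda_act \<xi> A (n, l) p)"
    using tda_act_in_tda_space[OF assms] by (intro vec_exp_vec_ln) (simp add: tda_space_def)
  ultimately have "fst (tda_act \<xi> A (n, l) p) \<in> vec_exp ` cball 0 (\<Sum>i\<in>UNIV. norm (vec_ln (\<xi> i)))"
    by (metis image_eqI)
  moreover have "snd (tda_act \<xi> A (n, l) p) = (\<Sum>b\<in>B. u' b *\<^sub>R b) - (\<Sum>b\<in>B. of_int \<lfloor>u' b\<rfloor> *\<^sub>R b)"
    by (simp add: tda_act_def u' l_def)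
  then have "snd (tda_act \<xi> A (n, l) p) \<in> cball 0 (\<Sum>b\<in>B. norm b)"
    using norm_sum_frac_le by simp
  ultimately show thesis
    using that \<open>(n, l) \<in> tda_group B\<close> by (simp add: mem_Times_iff)
qed

lemma compact_space_tda_orbit_space: "compact_space orbit_space"
proof (rule compact_space_orbit_space)
  let ?C = "vec_exp ` cball 0 (\<Sum>i\<in>UNIV. norm (vec_ln (\<xi> i))) \<times> cball (0 :: 'e) (\<Sum>b\<in>B. norm b)"
  show "compact ?C"
    by (intro compact_Times compact_continuous_image[OF continuous_on_vec_exp] compact_cball)
  show "?C \<subseteq> tda_space"
  proof
    fix x assume "x \<in> ?C"
    then obtain y where "fst x = vec_exp y"
      by (auto simp: mem_Times_iff)
    then show "x \<in> tda_space"
      by (simp add: tda_space_def vec_exp_def)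
  qed
  show "\<exists>g\<in>tda_group B. tda_act \<xi> A g p \<in> ?C" if p: "p \<in> tda_space" for p
  proof -
    obtain g where "g \<in> tda_group B" "tda_act \<xi> A g p \<in> ?C"
      using tda_act_into_fundamental_set[OF p] .
    then show ?thesis ..
  qed
qed

end

theorem proposition2p4:
  fixes B :: "'e::euclidean_space set"
    and \<xi> :: "'s::finite \<Rightarrow> real^'s"
    and A :: "'s \<Rightarrow> 'e \<Rightarrow> 'e"
  assumes basis: "independent B" "span B = UNIV"
    and xi_pos: "\<And>i j. 0 < \<xi> i $ j"
    and A_lin: "\<And>i. linear (A i)"
    and A_bij: "\<And>i. bij (A i)"
    and A_lattice: "\<And>i. A i ` int_span B = int_span B"
    and A_comm: "\<And>i i'. A i \<circ> A i' = A i' \<circ> A i"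
    and nondeg: "tda_nondegenerate \<xi>"
  shows "properly_discontinuous (tda_group B) (tda_act \<xi> A) tda_space
    \<and> compact_space
        (quotient_topology (top_of_set tda_space) (orbit (tda_group B) (tda_act \<xi> A)))
    \<and> is_manifold_modelled_on
        (quotient_topology (top_of_set tda_space) (orbit (tda_group B) (tda_act \<xi> A)))
        TYPE((real^'s) \<times> 'e)"
proof -
  interpret nondegenerate_twisted_diagonal_action A B \<xi>
    using assms
    by (simp add: nondegenerate_twisted_diagonal_action_def
        nondegenerate_twisted_diagonal_action_axioms_def twisted_diagonal_action_def
        twisted_diagonal_action_axioms_def commuting_linear_automorphisms_def)
  have "is_manifold_modelled_on orbit_space TYPE((real^'s) \<times> 'e)"
    unfolding is_manifold_modelled_on_def
  proof (intro conjI ballI)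
    show "Hausdorff_space orbit_space"
      by (rule Hausdorff_space_orbit_space)
    show "second_countable orbit_space"
      by (rule second_countable_orbit_space[OF second_countable_euclidean])
    show "\<exists>U. openin orbit_space U \<and> y \<in> U \<and>
        (\<exists>V :: ((real^'s) \<times> 'e) set. open V \<and> subtopology orbit_space U homeomorphic_space top_of_set V)"
      if "y \<in> topspace orbit_space" for y
      using tda_act_free that by (rule orbit_space_locally_homeomorphic)
  qed
  then show ?thesis
    using properly_discontinuous_tda compact_space_tda_orbit_space by blast
qed

end
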